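(* Let $A_i\in\mathbb{R}^{n\times n}$, $i\ge -1$, be entrywise nonnegative matrices such that $A=\sum_{i=-1}^{\infty}A_i$ is irreducible and row stochastic. Assume that the series $\sum_{i=-1}^\infty iA_i$ converges and that $\eta=\mathbf v^T\mathbf w<0$, where $\mathbf v>0$ is the unique vector with $\mathbf v^TA=\mathbf v^T$, $\mathbf v^T\mathbf e=1$, and $\mathbf w=\sum_{i=-1}^\infty iA_i\mathbf e$. Let $G$ be the componentwise minimal nonnegative solution of $X=\sum_{i=-1}^{\infty}A_iX^{i+1}$. Let $X_0$ be a row stochastic matrix and define, for $k\ge 0$, \[ (I_n-A_0)Y_k=A_{-1}+\sum_{i=1}^{\infty}A_iX_k^{i+1},\qquad X_{k+1}=Y_k+(I_n-A_0)^{-1}A_1\,(Y_k^2-X_k^2). \] Then the sequence $\{X_k\}_{k\in\mathbb N}$ converges to $G$.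
   Context: $\mathbf e$ denotes the all-ones column vector; a (row) stochastic matrix is an entrywise nonnegative matrix $S$ with $S\mathbf e=\mathbf e$. Inequalities between matrices are entrywise. Under the assumptions, $I_n-A_0$ is a nonsingular M-matrix and the minimal nonnegative solution $G$ exists. *)

theory Defs
  imports "HOL-Analysis.Analysis"
begin

text \<open>Matrix power with respect to matrix multiplication (the ring structure on
  vec is componentwise, so we define it explicitly).\<close>
primrec mpow :: "real^'n^'n \<Rightarrow> nat \<Rightarrow> real^'n^'n" where
  "mpow M 0 = mat 1"
| "mpow M (Suc k) = M ** mpow M k"

definition nonneg_mat :: "real^'n^'m \<Rightarrow> bool" where
  "nonneg_mat M \<longleftrightarrow> (\<forall>i j. M $ i $ j \<ge> 0)"

definition stochastic :: "real^'n^'n \<Rightarrow> bool" where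
  "stochastic M \<longleftrightarrow> nonneg_mat M \<and> M *v (\<chi> i. 1) = (\<chi> i. 1)"

definition irreducible_mat :: "real^'n^'n \<Rightarrow> bool" where
  "irreducible_mat M \<longleftrightarrow> (\<forall>i j. \<exists>k. mpow M k $ i $ j > 0)"

definition mat_le :: "real^'n^'m \<Rightarrow> real^'n^'m \<Rightarrow> bool" where
  "mat_le M N \<longleftrightarrow> (\<forall>i j. M $ i $ j \<le> N $ i $ j)"

text \<open>A i is the coefficient A_i for i \<ge> -1. X solves X = sum_{i\<ge>-1} A_i X^(i+1).\<close>
definition solves_eq :: "(int \<Rightarrow> real^'n^'n) \<Rightarrow> real^'n^'n \<Rightarrow> bool" where
  "solves_eq A X \<longleftrightarrow> summable (\<lambda>k. A (int k - 1) ** mpow X k)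
      \<and> X = (\<Sum>k. A (int k - 1) ** mpow X k)"

definition minimal_nonneg_solution :: "(int \<Rightarrow> real^'n^'n) \<Rightarrow> real^'n^'n \<Rightarrow> bool" where
  "minimal_nonneg_solution A G \<longleftrightarrow> nonneg_mat G \<and> solves_eq A G
      \<and> (\<forall>X. nonneg_mat X \<and> solves_eq A X \<longrightarrow> mat_le G X)"

end

(*
  The iteration is X_{k+1} = Phi X_k with Phi X = Q (F X) X, where
  F X = (I - A_0)^{-1} (A_{-1} + sum_{i>=1} A_i X^{i+1}) is the natural fixed-point map, whose
  fixed points are the solutions, and Q U V is F V with the quadratic term A_1 V^2 replaced by
  A_1 U^2. Both maps are monotone on nonnegative matrices, so the iterates of Phi from 0 increase,
  stay below G and below every X_k, and converge to a fixed point of F, which is G by minimality.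

  The negative drift yields, via Farkas' lemma, a vector a with P a - a + w < 0. It makes I - A_0
  a nonsingular M-matrix, and a maximum principle for 1 - (H^n e)_l - eps (n + a_l) shows that
  every nonnegative solution H has row sums at least 1. Since Phi preserves stochasticity, each
  X_k is stochastic, so the nonnegative gap X_k minus the lower iterate has row sums tending to
  1 - G e <= 0, and X_k converges to G.
*)

theory Submission
  imports Defs
begin

abbreviation ones :: "real^'n" where
  "ones \<equiv> \<chi> i. 1"

section \<open>Nonnegative matrices and matrix series\<close>

lemma vec_sums_iff:
  fixes f :: "nat \<Rightarrow> 'a::real_normed_vector^'n"
  shows "f sums s \<longleftrightarrow> (\<forall>i. (\<lambda>k. f k $ i) sums (s $ i))"
proof
  assume "f sums s"
  then show "\<forall>i. (\<lambda>k. f k $ i) sums (s $ i)"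
    by (simp add: sums_vec_nth)
next
  assume "\<forall>i. (\<lambda>k. f k $ i) sums (s $ i)"
  then show "f sums s"
    unfolding sums_def by (intro vec_tendstoI) simp
qed

lemma mat_sums_iff:
  fixes f :: "nat \<Rightarrow> real^'m^'n"
  shows "f sums S \<longleftrightarrow> (\<forall>i j. (\<lambda>k. f k $ i $ j) sums (S $ i $ j))"
  by (simp add: vec_sums_iff)

lemma mat_summable_iff:
  fixes f :: "nat \<Rightarrow> real^'m^'n"
  shows "summable f \<longleftrightarrow> (\<forall>i j. summable (\<lambda>k. f k $ i $ j))"
proof
  assume "\<forall>i j. summable (\<lambda>k. f k $ i $ j)"
  then have "f sums (\<chi> i j. \<Sum>k. f k $ i $ j)"
    by (simp add: mat_sums_iff summable_sums)
  then show "summable f"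
    by (auto simp: summable_def)
qed (simp add: summable_vec_nth)

lemma suminf_mat_nth:
  fixes f :: "nat \<Rightarrow> real^'m^'n"
  assumes "summable f"
  shows "suminf f $ i $ j = (\<Sum>k. f k $ i $ j)"
  using assms by (metis mat_sums_iff sums_unique summable_sums)

lemma matrix_mult_add_rdistrib: "((A::real^'m^'n) + B) ** (C::real^'p^'m) = A ** C + B ** C"
  by (simp add: vec_eq_iff matrix_matrix_mult_def sum.distrib distrib_right)

lemma matrix_mult_diff_ldistrib: "(A::real^'m^'n) ** ((B::real^'p^'m) - C) = A ** B - A ** C"
  by (simp add: vec_eq_iff matrix_matrix_mult_def sum_subtractf right_diff_distrib)

lemma matrix_mult_diff_rdistrib: "((A::real^'m^'n) - B) ** (C::real^'p^'m) = A ** C - B ** C"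
  by (simp add: vec_eq_iff matrix_matrix_mult_def sum_subtractf left_diff_distrib)

lemma bounded_linear_matrix_mult_right: "bounded_linear (\<lambda>M::real^'m^'n. M ** B)"
  unfolding linear_conv_bounded_linear[symmetric]
  by (rule linearI) (simp_all add: matrix_mult_add_rdistrib scalar_matrix_assoc)

lemma bounded_linear_matrix_vector_mult_left: "bounded_linear (\<lambda>M::real^'m^'n. M *v x)"
  unfolding linear_conv_bounded_linear[symmetric]
  by (rule linearI) (simp_all add: matrix_vector_mult_add_rdistrib scaleR_matrix_vector_assoc)

lemmas sums_matrix_mult_right = bounded_linear.sums[OF bounded_linear_matrix_mult_right]
lemmas sums_matrix_vector_mult = bounded_linear.sums[OF bounded_linear_matrix_vector_mult_left]

lemma tendsto_matrix_mult:
  fixes f :: "'b \<Rightarrow> real^'m^'n" and g :: "'b \<Rightarrow> real^'p^'m"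
  assumes "(f \<longlongrightarrow> a) F" "(g \<longlongrightarrow> b) F"
  shows "((\<lambda>x. f x ** g x) \<longlongrightarrow> a ** b) F"
  unfolding matrix_matrix_mult_def
  by (intro tendsto_vec_lambda tendsto_sum tendsto_mult tendsto_vec_nth assms)

lemma mpow_add: "mpow M (a + b) = mpow M a ** mpow M b"
  by (induction a) (auto simp: matrix_mul_assoc)

lemma tendsto_mpow:
  fixes f :: "'b \<Rightarrow> real^'n^'n"
  assumes "(f \<longlongrightarrow> a) F"
  shows "((\<lambda>x. mpow (f x) k) \<longlongrightarrow> mpow a k) F"
  by (induction k) (auto intro: tendsto_matrix_mult assms)

lemma nonneg_mat_mult: "nonneg_mat A \<Longrightarrow> nonneg_mat B \<Longrightarrow> nonneg_mat (A ** B)"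
  unfolding nonneg_mat_def matrix_matrix_mult_def by (auto intro: sum_nonneg)

lemma nonneg_mat_add: "nonneg_mat A \<Longrightarrow> nonneg_mat B \<Longrightarrow> nonneg_mat (A + B)"
  unfolding nonneg_mat_def by simp

lemma nonneg_mat_one: "nonneg_mat (mat 1)"
  unfolding nonneg_mat_def by (simp add: mat_def)

lemma nonneg_mat_mpow: "nonneg_mat M \<Longrightarrow> nonneg_mat (mpow M k)"
  by (induction k) (simp_all add: nonneg_mat_mult nonneg_mat_one)

lemma nonneg_mat_suminf:
  fixes f :: "nat \<Rightarrow> real^'m^'n"
  assumes "\<And>k. nonneg_mat (f k)" "summable f"
  shows "nonneg_mat (suminf f)"
  using assms summable_vec_nth[OF summable_vec_nth[OF assms(2)]]
  by (auto simp: nonneg_mat_def suminf_mat_nth intro: suminf_nonneg)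

lemma mat_le_refl [simp]: "mat_le A A"
  by (simp add: mat_le_def)

lemma mat_le_trans: "mat_le A B \<Longrightarrow> mat_le B C \<Longrightarrow> mat_le A C"
  unfolding mat_le_def by (meson order_trans)

lemma mat_le_antisym: "mat_le A B \<Longrightarrow> mat_le B A \<Longrightarrow> A = B"
  unfolding mat_le_def by (simp add: vec_eq_iff order_antisym)

lemma mat_le_add: "mat_le A A' \<Longrightarrow> mat_le B B' \<Longrightarrow> mat_le (A + B) (A' + B')"
  unfolding mat_le_def by (simp add: add_mono)

lemma mat_le_mult:
  assumes "nonneg_mat A" "mat_le A A'" "nonneg_mat B" "mat_le B B'"
  shows "mat_le (A ** B) (A' ** B')"
  using assms unfolding nonneg_mat_def mat_le_def matrix_matrix_mult_def
  by (auto intro!: sum_mono mult_mono) (meson order_trans)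

lemma mat_le_mpow: "nonneg_mat A \<Longrightarrow> mat_le A B \<Longrightarrow> mat_le (mpow A k) (mpow B k)"
  by (induction k) (simp_all add: mat_le_mult nonneg_mat_mpow)

lemma summable_mat_le:
  fixes f g :: "nat \<Rightarrow> real^'m^'n"
  assumes "\<And>k. nonneg_mat (f k)" "\<And>k. mat_le (f k) (g k)" "summable g"
  shows "summable f" and "mat_le (suminf f) (suminf g)"
proof -
  have g: "summable (\<lambda>k. g k $ i $ j)" for i j
    using assms(3) mat_summable_iff by blast
  have f: "summable (\<lambda>k. f k $ i $ j)" for i j
    by (rule summable_comparison_test'[OF g[of i j]])
      (use assms(1,2) in \<open>auto simp: nonneg_mat_def mat_le_def\<close>)
  then show "summable f"
    using mat_summable_iff by blast
  then show "mat_le (suminf f) (suminf g)"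
    unfolding mat_le_def
  proof (intro allI)
    fix i j
    have "(\<Sum>k. f k $ i $ j) \<le> (\<Sum>k. g k $ i $ j)"
      by (rule suminf_le[OF _ f g]) (use assms(2) in \<open>simp add: mat_le_def\<close>)
    with \<open>summable f\<close> show "suminf f $ i $ j \<le> suminf g $ i $ j"
      by (simp add: suminf_mat_nth assms(3))
  qed
qed

lemma stochastic_mult: "stochastic A \<Longrightarrow> stochastic B \<Longrightarrow> stochastic (A ** B)"
  unfolding stochastic_def by (simp add: nonneg_mat_mult matrix_vector_mul_assoc[symmetric])

lemma stochastic_one: "stochastic (mat 1)"
  by (simp add: stochastic_def nonneg_mat_one)

lemma stochastic_mpow: "stochastic A \<Longrightarrow> stochastic (mpow A k)"
  by (induction k) (simp_all add: stochastic_mult stochastic_one)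

lemma stochastic_row_sum: "stochastic M \<Longrightarrow> (\<Sum>l\<in>UNIV. M $ i $ l) = 1"
  unfolding stochastic_def by (simp add: vec_eq_iff matrix_vector_mult_def)

lemma stochastic_entry_le_1:
  assumes "stochastic M"
  shows "M $ i $ j \<le> 1"
proof -
  have "M $ i $ j \<le> (\<Sum>l\<in>UNIV. M $ i $ l)"
    by (rule member_le_sum) (use assms in \<open>auto simp: stochastic_def nonneg_mat_def\<close>)
  then show ?thesis
    using stochastic_row_sum[OF assms] by simp
qed

lemma stochastic_min_le:
  fixes a :: "real^'n"
  assumes "stochastic P"
  shows "\<exists>j. a $ j \<le> (P *v a) $ j"
proof -
  obtain j where j: "\<And>l. a $ j \<le> a $ l"
    using ex_min_if_finite[of "range (($) a)"] by (auto simp: not_less)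
  have "a $ j = (\<Sum>l\<in>UNIV. P $ j $ l * a $ j)"
    by (simp add: sum_distrib_right[symmetric] stochastic_row_sum[OF assms])
  also have "\<dots> \<le> (\<Sum>l\<in>UNIV. P $ j $ l * a $ l)"
    using assms j by (intro sum_mono mult_left_mono) (auto simp: stochastic_def nonneg_mat_def)
  finally show ?thesis
    by (auto simp: matrix_vector_mult_def)
qed

lemma irreducible_closed_set_UNIV:
  fixes P :: "real^'n^'n"
  assumes irr: "irreducible_mat P" and nn: "nonneg_mat P" and "j0 \<in> J"
    and closed: "\<And>j l. j \<in> J \<Longrightarrow> P $ j $ l > 0 \<Longrightarrow> l \<in> J"
  shows "J = UNIV"
proof -
  have reach: "l \<in> J" if "j \<in> J" "mpow P k $ j $ l > 0" for k j l
    using that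
  proof (induction k arbitrary: j)
    case 0
    then show ?case by (auto simp: mat_def split: if_splits)
  next
    case (Suc k)
    have "0 < (\<Sum>m\<in>UNIV. P $ j $ m * mpow P k $ m $ l)"
      using Suc.prems(2) by (simp add: matrix_matrix_mult_def)
    then obtain m where "0 < P $ j $ m * mpow P k $ m $ l"
      by (meson not_le sum_nonpos)
    moreover have "P $ j $ m \<ge> 0" "mpow P k $ m $ l \<ge> 0"
      using nn nonneg_mat_mpow[OF nn] unfolding nonneg_mat_def by auto
    ultimately have "P $ j $ m > 0" "mpow P k $ m $ l > 0"
      by (auto simp: zero_less_mult_iff)
    then show ?case
      using Suc.IH Suc.prems(1) closed by blast
  qed
  have "l \<in> J" for l
  proof -
    obtain k where "mpow P k $ j0 $ l > 0"
      using irr unfolding irreducible_mat_def by blast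
    then show ?thesis
      using reach \<open>j0 \<in> J\<close> by blast
  qed
  then show ?thesis
    by blast
qed

lemma ex_max_if_eventually_below:
  fixes h :: "nat \<Rightarrow> 'n::finite \<Rightarrow> real"
  assumes below: "\<And>n l. N < n \<Longrightarrow> h n l \<le> h 0 l0"
  obtains n0 l1 where "\<And>n l. h n l \<le> h n0 l1"
proof -
  let ?S = "case_prod h ` ({..N} \<times> UNIV)"
  have "finite ?S" "?S \<noteq> {}"
    by auto
  then have "Max ?S \<in> ?S"
    by (rule Max_in)
  then obtain p where "p \<in> {..N} \<times> UNIV" "Max ?S = case_prod h p"
    by blast
  then obtain n0 l1 where max: "h n0 l1 = Max ?S"
    by (cases p) auto
  have in_S: "h n l \<in> ?S" if "n \<le> N" for n l
    using that by (auto intro: rev_image_eqI[of "(n, l)"])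
  have "h n l \<le> h n0 l1" for n l
  proof (cases "n \<le> N")
    case True
    then show ?thesis
      unfolding max by (intro Max_ge \<open>finite ?S\<close> in_S)
  next
    case False
    then have "h n l \<le> h 0 l0"
      by (simp add: below)
    also have "h 0 l0 \<le> h n0 l1"
      unfolding max by (intro Max_ge \<open>finite ?S\<close> in_S) simp
    finally show ?thesis .
  qed
  then show ?thesis
    by (rule that)
qed

lemma nonneg_mat_mat_le: "nonneg_mat A \<Longrightarrow> mat_le A B \<Longrightarrow> nonneg_mat B"
  unfolding nonneg_mat_def mat_le_def by (meson order_trans)

lemma mat_le_sandwich_tendsto:
  fixes f g h :: "nat \<Rightarrow> real^'m^'n"
  assumes "\<And>k. mat_le (f k) (g k)" "\<And>k. mat_le (g k) (h k)" "f \<longlonglongrightarrow> L" "h \<longlonglongrightarrow> L"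
  shows "g \<longlonglongrightarrow> L"
proof (intro vec_tendstoI)
  fix i j
  have "f k $ i $ j \<le> g k $ i $ j" "g k $ i $ j \<le> h k $ i $ j" for k
    using assms(1,2)[of k] by (simp_all add: mat_le_def)
  then show "(\<lambda>k. g k $ i $ j) \<longlonglongrightarrow> L $ i $ j"
    by (intro real_tendsto_sandwich[OF _ _ tendsto_vec_nth[OF tendsto_vec_nth[OF assms(3)]]
          tendsto_vec_nth[OF tendsto_vec_nth[OF assms(4)]]] always_eventually allI)
qed

lemma mat_le_incseq_tendsto:
  fixes Z :: "nat \<Rightarrow> real^'m^'n"
  assumes inc: "\<And>k. mat_le (Z k) (Z (Suc k))" and bdd: "\<And>k. mat_le (Z k) B"
  obtains L where "Z \<longlonglongrightarrow> L" "mat_le L B" "\<And>k. mat_le (Z k) L"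
proof
  define L where "L = (\<chi> i j. SUP k. Z k $ i $ j)"
  have "incseq (\<lambda>k. Z k $ i $ j)" for i j
    using inc by (intro incseq_SucI) (simp add: mat_le_def)
  moreover have "bdd_above (range (\<lambda>k. Z k $ i $ j))" for i j
    using bdd by (intro bdd_aboveI[of _ "B $ i $ j"]) (auto simp: mat_le_def)
  ultimately have "(\<lambda>k. Z k $ i $ j) \<longlonglongrightarrow> L $ i $ j" for i j
    unfolding L_def by (simp add: LIMSEQ_incseq_SUP)
  then show "Z \<longlonglongrightarrow> L"
    by (intro vec_tendstoI) simp
  show "mat_le L B"
    using bdd by (auto simp: L_def mat_le_def intro: cSUP_least)
  show "mat_le (Z k) L" for k
    using \<open>\<And>i j. bdd_above (range (\<lambda>k. Z k $ i $ j))\<close>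
    by (auto simp: L_def mat_le_def intro: cSUP_upper)
qed

text \<open>Tannery's theorem, with the series at the upper bound \<open>B\<close> as dominating series.\<close>
lemma tendsto_mat_power_series:
  fixes C Z :: "nat \<Rightarrow> real^'n^'n"
  assumes C: "\<And>j. nonneg_mat (C j)" and summable: "summable (\<lambda>j. C j ** mpow B j)"
    and lim: "Z \<longlonglongrightarrow> L" and Z: "\<And>k. nonneg_mat (Z k)" "\<And>k. mat_le (Z k) B"
  shows "(\<lambda>k. \<Sum>j. C j ** mpow (Z k) j) \<longlonglongrightarrow> (\<Sum>j. C j ** mpow L j)"
proof -
  have dom: "nonneg_mat (C j ** mpow (Z k) j)" "mat_le (C j ** mpow (Z k) j) (C j ** mpow B j)" for j k
    using C Z by (simp_all add: nonneg_mat_mult nonneg_mat_mpow mat_le_mult mat_le_mpow)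
  have Z_nth: "(\<lambda>k. Z k $ i $ j) \<longlonglongrightarrow> L $ i $ j" for i j
    by (intro tendsto_vec_nth lim)
  have "0 \<le> L $ i $ j" for i j
    by (rule LIMSEQ_le_const[OF Z_nth]) (use Z(1) in \<open>auto simp: nonneg_mat_def\<close>)
  moreover have "L $ i $ j \<le> B $ i $ j" for i j
    by (rule LIMSEQ_le_const2[OF Z_nth]) (use Z(2) in \<open>auto simp: mat_le_def\<close>)
  ultimately have L: "nonneg_mat L" "mat_le L B"
    by (simp_all add: nonneg_mat_def mat_le_def)
  have summable_L: "summable (\<lambda>j. C j ** mpow L j)"
    by (rule summable_mat_le(1)[OF _ _ summable])
      (simp_all add: C L nonneg_mat_mult nonneg_mat_mpow mat_le_mult mat_le_mpow)
  show ?thesis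
  proof (intro vec_tendstoI)
    fix r c
    let ?a = "\<lambda>j k. (C j ** mpow (Z k) j) $ r $ c" and ?M = "\<lambda>j. (C j ** mpow B j) $ r $ c"
    have "norm (?a j k) \<le> ?M j" for j k
      using dom[of j k] by (simp add: nonneg_mat_def mat_le_def)
    then have bound: "\<forall>\<^sub>F (j, k) in sequentially \<times>\<^sub>F sequentially. norm (?a j k) \<le> ?M j"
      by (intro always_eventually) auto
    have lim_a: "(\<lambda>k. ?a j k) \<longlonglongrightarrow> (C j ** mpow L j) $ r $ c" for j
      by (intro tendsto_vec_nth tendsto_matrix_mult tendsto_const tendsto_mpow lim)
    have "summable ?M"
      by (intro summable_vec_nth summable)
    from tannerys_theorem[OF lim_a bound this sequentially_bot]
    have "(\<lambda>k. \<Sum>j. ?a j k) \<longlonglongrightarrow> (\<Sum>j. (C j ** mpow L j) $ r $ c)"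
      by (elim conjE)
    moreover have "summable (\<lambda>j. C j ** mpow (Z k) j)" for k
      by (rule summable_mat_le(1)[OF dom summable])
    ultimately show "(\<lambda>k. (\<Sum>j. C j ** mpow (Z k) j) $ r $ c) \<longlonglongrightarrow> (\<Sum>j. C j ** mpow L j) $ r $ c"
      using summable_L by (simp add: suminf_mat_nth)
  qed
qed

lemma stochastic_squeeze_tendsto:
  fixes X Z :: "nat \<Rightarrow> real^'n^'n"
  assumes X: "\<And>k. stochastic (X k)" and ZX: "\<And>k. mat_le (Z k) (X k)"
    and lim: "Z \<longlonglongrightarrow> G" and G: "\<And>i. 1 \<le> (G *v ones) $ i"
  shows "X \<longlonglongrightarrow> G"
proof (intro vec_tendstoI)
  fix i j
  have Z_nth: "(\<lambda>k. Z k $ i $ l) \<longlonglongrightarrow> G $ i $ l" for l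
    by (intro tendsto_vec_nth lim)
  define U where "U k = 1 - (\<Sum>l\<in>UNIV. Z k $ i $ l)" for k
  have gap: "0 \<le> X k $ i $ j - Z k $ i $ j" "X k $ i $ j - Z k $ i $ j \<le> U k" for k
  proof -
    show "0 \<le> X k $ i $ j - Z k $ i $ j"
      using ZX[of k] by (simp add: mat_le_def)
    have "X k $ i $ j - Z k $ i $ j \<le> (\<Sum>l\<in>UNIV. X k $ i $ l - Z k $ i $ l)"
      by (rule member_le_sum) (use ZX[of k] in \<open>auto simp: mat_le_def\<close>)
    also have "\<dots> = U k"
      using stochastic_row_sum[OF X] by (simp add: U_def sum_subtractf)
    finally show "X k $ i $ j - Z k $ i $ j \<le> U k" .
  qed
  have "(\<lambda>k. \<Sum>l\<in>UNIV. Z k $ i $ l) \<longlonglongrightarrow> (\<Sum>l\<in>UNIV. G $ i $ l)"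
    by (intro tendsto_sum Z_nth)
  then have lim_U: "U \<longlonglongrightarrow> 1 - (G *v ones) $ i"
    unfolding U_def by (simp add: matrix_vector_mult_def tendsto_diff)
  have U_nonneg: "0 \<le> U k" for k
    using gap[of k] by linarith
  have "0 \<le> 1 - (G *v ones) $ i"
    by (rule tendsto_lowerbound[OF lim_U]) (simp_all add: always_eventually U_nonneg)
  with lim_U have "U \<longlonglongrightarrow> 0"
    using G[of i] by simp
  then have "(\<lambda>k. X k $ i $ j - Z k $ i $ j) \<longlonglongrightarrow> 0"
    by (rule real_tendsto_sandwich[rotated 2, OF tendsto_const]) (use gap in auto)
  from tendsto_add[OF this Z_nth[of j]] show "(\<lambda>k. X k $ i $ j) \<longlonglongrightarrow> G $ i $ j"
    by simp
qed

section \<open>Negative drift and Lyapunov vectors\<close>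

lemma affine_nonneg_imp_slope_nonneg:
  fixes c g :: real
  assumes "\<And>t. t > 0 \<Longrightarrow> 0 \<le> c + t * g"
  shows "0 \<le> g"
proof (rule ccontr)
  assume "\<not> 0 \<le> g"
  then have "0 \<le> c + ((\<bar>c\<bar> + 1) / - g) * g"
    using divide_pos_neg[of "\<bar>c\<bar> + 1" g] by (intro assms) simp
  with \<open>\<not> 0 \<le> g\<close> show False
    by simp
qed

lemma affine_nonneg_imp_intercept_nonneg:
  fixes c g :: real
  assumes "\<And>t. t > 0 \<Longrightarrow> 0 \<le> c + t * g"
  shows "0 \<le> c"
proof (rule tendsto_lowerbound)
  show "((\<lambda>t. c + t * g) \<longlongrightarrow> c) (at_right 0)"
    by (auto intro!: tendsto_eq_intros)
  show "\<forall>\<^sub>F t in at_right 0. 0 \<le> c + t * g"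
    using eventually_at_right_less[of 0] by eventually_elim (use assms in auto)
qed simp

lemma affine_nonneg_imp_slope_zero:
  fixes c g :: real
  assumes "\<And>t. 0 \<le> c + t * g"
  shows "g = 0"
  using affine_nonneg_imp_slope_nonneg[of c g] affine_nonneg_imp_slope_nonneg[of c "- g"] assms
  by (metis minus_mult_commute order_antisym neg_0_le_iff_le)

lemma no_lyapunov_vector_imp_separation:
  fixes P :: "real^'n^'n" and w :: "real^'n"
  assumes "\<nexists>a. \<forall>j. (P *v a - a + w) $ j < 0"
  obtains y where "y \<noteq> 0"
    and "\<And>a p. \<forall>j. 0 < p $ j \<Longrightarrow> 0 \<le> (y \<bullet> w + y \<bullet> p) + y \<bullet> (P *v a - a)"
proof -
  define pos where "pos = {p :: real^'n. \<forall>j. 0 < p $ j}"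
  define L where "L = (\<lambda>(a, p). P *v a - a + p)"
  define K where "K = (+) w ` L ` (UNIV \<times> pos)"
  have "convex pos"
    unfolding pos_def by (rule convex_box_cart) (simp add: greaterThan_def[symmetric])
  moreover have "linear L"
    unfolding L_def
    by (rule linearI) (auto simp: matrix_vector_right_distrib matrix_vector_mult_scaleR algebra_simps)
  ultimately have "convex K"
    unfolding K_def by (intro convex_translation convex_linear_image convex_Times convex_UNIV)
  moreover have "0 \<notin> K"
  proof
    assume "0 \<in> K"
    then obtain a p where "p \<in> pos" "w + (P *v a - a + p) = 0"
      by (auto simp: K_def L_def)
    then have "P *v a - a + w = - p"
      by (simp add: eq_neg_iff_add_eq_0 add_ac)
    with \<open>p \<in> pos\<close> have "\<forall>j. (P *v a - a + w) $ j < 0"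
      by (simp add: pos_def)
    with assms show False
      by blast
  qed
  ultimately obtain y where "y \<noteq> 0" and y: "\<And>x. x \<in> K \<Longrightarrow> 0 \<le> y \<bullet> x"
    by (metis separating_hyperplane_set_0)
  have sep: "0 \<le> (y \<bullet> w + y \<bullet> p) + y \<bullet> (P *v a - a)" if "\<forall>j. 0 < p $ j" for a p
  proof -
    have "w + L (a, p) \<in> K"
      unfolding K_def by (intro imageI) (simp add: pos_def that)
    from y[OF this] show ?thesis
      by (simp add: L_def inner_add_right)
  qed
  from sep show ?thesis
    by (rule that[OF \<open>y \<noteq> 0\<close>])
qed

lemma no_lyapunov_vector_imp_stationary:
  fixes P :: "real^'n^'n" and w :: "real^'n"
  assumes "\<nexists>a. \<forall>j. (P *v a - a + w) $ j < 0"
  obtains y where "y \<noteq> 0" "\<And>l. 0 \<le> y $ l" "y v* P = y" "0 \<le> y \<bullet> w"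
proof -
  obtain y where "y \<noteq> 0"
    and sep: "\<And>a p. \<forall>j. 0 < p $ j \<Longrightarrow> 0 \<le> (y \<bullet> w + y \<bullet> p) + y \<bullet> (P *v a - a)"
    using no_lyapunov_vector_imp_separation[OF assms] by blast
  let ?ones = "ones :: real^'n"
  have "0 \<le> y $ l" for l
  proof (rule affine_nonneg_imp_slope_nonneg)
    fix t :: real
    assume "t > 0"
    then have "\<forall>j. 0 < (?ones + t *\<^sub>R axis l 1) $ j"
      by (simp add: axis_def)
    from sep[OF this, of 0] show "0 \<le> (y \<bullet> w + y \<bullet> ?ones) + t * y $ l"
      by (simp add: inner_add_right inner_axis add.assoc)
  qed
  moreover have "y \<bullet> (P *v x - x) = 0" for x
  proof (rule affine_nonneg_imp_slope_zero)
    fix t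
    show "0 \<le> (y \<bullet> w + y \<bullet> ?ones) + t * (y \<bullet> (P *v x - x))"
      using sep[of ?ones "t *\<^sub>R x"] by (simp add: matrix_vector_mult_scaleR inner_diff_right right_diff_distrib)
  qed
  then have "(y v* P - y) \<bullet> x = 0" for x
    by (simp add: inner_diff_left dot_lmul_matrix inner_diff_right)
  then have "y v* P = y"
    using inner_eq_zero_iff[of "y v* P - y"] by simp
  moreover have "0 \<le> y \<bullet> w"
  proof (rule affine_nonneg_imp_intercept_nonneg)
    fix t :: real
    assume "t > 0"
    then show "0 \<le> y \<bullet> w + t * (y \<bullet> ?ones)"
      using sep[of "t *\<^sub>R ?ones" 0] by simp
  qed
  ultimately show ?thesis
    by (rule that[OF \<open>y \<noteq> 0\<close>])
qed

lemma stationary_vector_pos: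
  fixes P :: "real^'n^'n"
  assumes irr: "irreducible_mat P" and nn: "nonneg_mat P"
    and y: "y \<noteq> 0" "\<And>l. 0 \<le> y $ l" "y v* P = y"
  shows "0 < y $ l"
proof -
  obtain j0 where "y $ j0 \<noteq> 0"
    using y(1) by (metis vec_eq_iff zero_index)
  have "{j. 0 < y $ j} = UNIV"
  proof (rule irreducible_closed_set_UNIV[OF irr nn])
    show "j0 \<in> {j. 0 < y $ j}"
      using \<open>y $ j0 \<noteq> 0\<close> y(2)[of j0] by simp
  next
    fix j l
    assume "j \<in> {j. 0 < y $ j}" "0 < P $ j $ l"
    then have "0 < y $ j * P $ j $ l"
      by simp
    also have "\<dots> \<le> (\<Sum>i\<in>UNIV. y $ i * P $ i $ l)"
      by (rule member_le_sum) (use nn y(2) in \<open>auto simp: nonneg_mat_def\<close>)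
    also have "\<dots> = y $ l"
      by (subst (2) y(3)[symmetric]) (simp add: vector_matrix_mult_def)
    finally show "l \<in> {j. 0 < y $ j}"
      by simp
  qed
  then show ?thesis
    by auto
qed

lemma negative_drift_imp_lyapunov_vector:
  fixes P :: "real^'n^'n" and w :: "real^'n"
  assumes irr: "irreducible_mat P" and nn: "nonneg_mat P"
    and drift: "\<forall>v :: real^'n. (\<forall>i. v $ i > 0) \<and> v v* P = v \<and> sum (\<lambda>i. v $ i) UNIV = 1
                  \<longrightarrow> v \<bullet> w < 0"
  shows "\<exists>a. \<forall>j. (P *v a - a + w) $ j < 0"
proof (rule ccontr)
  assume "\<nexists>a. \<forall>j. (P *v a - a + w) $ j < 0"
  then obtain y where y: "y \<noteq> 0" "\<And>l. 0 \<le> y $ l" "y v* P = y" and "0 \<le> y \<bullet> w"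
    using no_lyapunov_vector_imp_stationary by blast
  have pos: "0 < y $ l" for l
    by (rule stationary_vector_pos[OF irr nn y])
  define s where "s = sum (\<lambda>i. y $ i) UNIV"
  have "0 < s"
    unfolding s_def using pos by (simp add: sum_pos)
  define v where "v = (1 / s) *\<^sub>R y"
  have "(\<forall>i. v $ i > 0) \<and> v v* P = v \<and> sum (\<lambda>i. v $ i) UNIV = 1"
    using pos \<open>0 < s\<close> y(3)
    by (simp add: v_def scaleR_vector_matrix_assoc sum_divide_distrib[symmetric] s_def)
  with drift have "v \<bullet> w < 0"
    by blast
  moreover have "0 \<le> v \<bullet> w"
    using \<open>0 \<le> y \<bullet> w\<close> \<open>0 < s\<close> by (simp add: v_def)
  ultimately show False
    by simp
qed

section \<open>The matrix equation of M/G/1-type Markov chains\<close>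

lemma matrix_inv_inverse:
  assumes "invertible M"
  shows "M ** matrix_inv M = mat 1" and "matrix_inv M ** M = mat 1"
  using someI_ex[OF assms[unfolded invertible_def]] unfolding matrix_inv_def by auto

locale mg1_type =
  fixes A :: "int \<Rightarrow> real^'n^'n"
  assumes nonneg: "\<And>i. i \<ge> -1 \<Longrightarrow> nonneg_mat (A i)"
    and summ: "summable (\<lambda>k. A (int k - 1))"
    and irr: "irreducible_mat (\<Sum>k. A (int k - 1))"
    and stoch: "stochastic (\<Sum>k. A (int k - 1))"
    and summ_drift: "summable (\<lambda>k. of_int (int k - 1) *\<^sub>R A (int k - 1))"
    and drift: "\<forall>v :: real^'n. (\<forall>i. v $ i > 0) \<and> v v* (\<Sum>k. A (int k - 1)) = v
                  \<and> sum (\<lambda>i. v $ i) UNIV = 1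
                \<longrightarrow> v \<bullet> ((\<Sum>k. of_int (int k - 1) *\<^sub>R A (int k - 1)) *v ones) < 0"
begin

text \<open>\<open>P\<close> and \<open>w\<close> are the matrix \<open>A = \<Sum>\<^sub>i A\<^sub>i\<close> and the drift vector \<open>\<Sum>\<^sub>i i A\<^sub>i e\<close> of the
  informal statement.\<close>
abbreviation P :: "real^'n^'n" where
  "P \<equiv> \<Sum>k. A (int k - 1)"

abbreviation w :: "real^'n" where
  "w \<equiv> (\<Sum>k. of_int (int k - 1) *\<^sub>R A (int k - 1)) *v ones"

lemma nonneg_A: "nonneg_mat (A (int k - 1))"
  using nonneg by simp

lemma A0_nonneg: "nonneg_mat (A 0)"
  using nonneg by simp

lemma P_nonneg: "nonneg_mat P"
  using nonneg_mat_suminf[OF nonneg_A summ] .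

lemma lyapunov_vector: "\<exists>a. \<forall>j. (P *v a - a + w) $ j < 0"
  using negative_drift_imp_lyapunov_vector[OF irr P_nonneg drift] .

lemma A_ones_sums: "(\<lambda>k. A (int k - 1) *v ones) sums ones"
proof -
  have "P *v ones = ones"
    using stoch by (simp add: stochastic_def)
  then show ?thesis
    using sums_matrix_vector_mult[OF summable_sums[OF summ], of ones] by simp
qed

lemma row_sums_sums: "(\<lambda>k. (A (int k - 1) *v ones) $ j) sums 1"
  using A_ones_sums by (simp add: vec_sums_iff)

lemma row_sum_nonneg: "0 \<le> (A (int k - 1) *v ones) $ j"
  using nonneg_A by (auto simp: matrix_vector_mult_def nonneg_mat_def intro: sum_nonneg)

lemma row_sum_le_1: "(A (int k - 1) *v ones) $ j \<le> 1"
  using sum_le_suminf[of "\<lambda>k. (A (int k - 1) *v ones) $ j" "{k}"] row_sums_sums[of j] row_sum_nonneg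
  by (simp add: sums_iff)

lemma full_row_A0:
  assumes "(A 0 *v ones) $ j = 1" "k \<noteq> 1"
  shows "A (int k - 1) $ j = 0"
proof -
  let ?r = "\<lambda>k. (A (int k - 1) *v ones) $ j"
  have "sum ?r {1, k} \<le> 1"
    using sum_le_suminf[of ?r "{1, k}"] row_sums_sums[of j] row_sum_nonneg by (simp add: sums_iff)
  then have "?r k = 0"
    using assms row_sum_nonneg[of k j] by simp
  then show ?thesis
    using nonneg_A[of k] by (simp add: matrix_vector_mult_def nonneg_mat_def vec_eq_iff sum_nonneg_eq_0_iff)
qed

lemma full_row_P:
  assumes "(A 0 *v ones) $ j = 1"
  shows "P $ j = A 0 $ j"
proof -
  have "(\<lambda>k. A (int k - 1) $ j) = (\<lambda>k. if k = 1 then A 0 $ j else 0)"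
    using full_row_A0[OF assms] by auto
  then have "(\<lambda>k. A (int k - 1) $ j) sums (A 0 $ j)"
    using sums_single[of 1 "\<lambda>_. A 0 $ j"] by simp
  moreover have "(\<lambda>k. A (int k - 1) $ j) sums (P $ j)"
    using sums_vec_nth[OF summable_sums[OF summ]] .
  ultimately show ?thesis
    using sums_unique2 by blast
qed

lemma A0_not_stochastic: "\<exists>j. (A 0 *v ones) $ j \<noteq> 1"
proof (rule ccontr)
  assume "\<nexists>j. (A 0 *v ones) $ j \<noteq> 1"
  then have full: "(A 0 *v ones) $ j = 1" for j
    by blast
  have "(\<lambda>k. of_int (int k - 1) *\<^sub>R A (int k - 1)) = (\<lambda>_. 0)"
  proof
    show "of_int (int k - 1) *\<^sub>R A (int k - 1) = 0" for k
      using full_row_A0[OF full] by (cases "k = 1") (auto simp: vec_eq_iff)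
  qed
  then have "w = 0"
    by simp
  moreover obtain a where "\<forall>j. (P *v a - a + w) $ j < 0"
    using lyapunov_vector by blast
  ultimately have "(P *v a) $ j < a $ j" for j
    by simp
  with stochastic_min_le[OF stoch, of a] show False
    by (meson not_le)
qed

lemma negative_min_row_A0:
  assumes "\<And>i. 0 \<le> ((mat 1 - A 0) *v x) $ i" and min: "\<And>l. x $ i \<le> x $ l" and "x $ i < 0"
  shows "(A 0 *v ones) $ i = 1" and "\<And>l. 0 < A 0 $ i $ l \<Longrightarrow> x $ l = x $ i"
proof -
  define r where "r = (A 0 *v ones) $ i"
  define T where "T = (\<Sum>l\<in>UNIV. A 0 $ i $ l * (x $ l - x $ i))"
  have terms: "0 \<le> A 0 $ i $ l * (x $ l - x $ i)" for l
    using A0_nonneg min by (simp add: nonneg_mat_def)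
  have "(A 0 *v x) $ i = T + x $ i * r"
    unfolding T_def r_def matrix_vector_mult_def
    by (simp add: sum_distrib_left sum.distrib[symmetric] algebra_simps)
  moreover have "0 \<le> x $ i - (A 0 *v x) $ i"
    using assms(1)[of i] by (simp add: matrix_vector_mult_diff_rdistrib)
  moreover have "x $ i \<le> x $ i * r"
    using row_sum_le_1[of 1 i] \<open>x $ i < 0\<close> by (simp add: r_def mult_le_cancel_left1)
  moreover have "0 \<le> T"
    unfolding T_def using terms by (rule sum_nonneg)
  ultimately have "T = 0" "x $ i * r = x $ i"
    by linarith+
  then show "(A 0 *v ones) $ i = 1"
    using \<open>x $ i < 0\<close> by (simp add: r_def)
  show "x $ l = x $ i" if "0 < A 0 $ i $ l" for l
  proof -
    have "A 0 $ i $ l * (x $ l - x $ i) = 0"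
      using \<open>T = 0\<close> terms unfolding T_def by (simp add: sum_nonneg_eq_0_iff)
    with that show ?thesis
      by simp
  qed
qed

text \<open>A negative minimum of \<open>x\<close> propagates, through the irreducible pattern of \<open>P\<close>, to rows
  of \<open>A 0\<close> that all sum to one.\<close>
lemma I_minus_A0_inverse_positive:
  assumes "\<And>i. 0 \<le> ((mat 1 - A 0) *v x) $ i"
  shows "0 \<le> x $ j"
proof (rule ccontr)
  assume "\<not> 0 \<le> x $ j"
  obtain j0 where min: "\<And>l. x $ j0 \<le> x $ l"
    using ex_min_if_finite[of "range (($) x)"] by (auto simp: not_less)
  define J where "J = {i. x $ i = x $ j0}"
  have J: "(A 0 *v ones) $ i = 1" "\<And>l. 0 < A 0 $ i $ l \<Longrightarrow> l \<in> J" if "i \<in> J" for i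
  proof -
    have "x $ i = x $ j0"
      using that by (simp add: J_def)
    then have min_i: "\<And>l. x $ i \<le> x $ l"
      using min by simp
    have "x $ i < 0"
      using \<open>x $ i = x $ j0\<close> min[of j] \<open>\<not> 0 \<le> x $ j\<close> by linarith
    from negative_min_row_A0[OF assms min_i \<open>x $ i < 0\<close>] \<open>x $ i = x $ j0\<close>
    show "(A 0 *v ones) $ i = 1" "\<And>l. 0 < A 0 $ i $ l \<Longrightarrow> l \<in> J"
      by (simp_all add: J_def)
  qed
  have "J = UNIV"
  proof (rule irreducible_closed_set_UNIV[OF irr P_nonneg])
    show "j0 \<in> J"
      by (simp add: J_def)
    show "l \<in> J" if "i \<in> J" "0 < P $ i $ l" for i l
      using J[OF \<open>i \<in> J\<close>] full_row_P[OF J(1)[OF \<open>i \<in> J\<close>]] \<open>0 < P $ i $ l\<close> by simp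
  qed
  with J(1) A0_not_stochastic show False
    by blast
qed

lemma invertible_I_minus_A0: "invertible (mat 1 - A 0)"
  unfolding invertible_left_inverse matrix_left_invertible_ker
proof (intro allI impI)
  fix x :: "real^'n"
  assume x: "(mat 1 - A 0) *v x = 0"
  then have "(mat 1 - A 0) *v (- x) = 0"
    by (simp add: matrix_vector_mult_def vec_eq_iff sum_negf)
  have "0 \<le> x $ j" "0 \<le> (- x) $ j" for j
    by (rule I_minus_A0_inverse_positive, simp add: x \<open>(mat 1 - A 0) *v (- x) = 0\<close>)+
  then show "x = 0"
    by (simp add: vec_eq_iff order_antisym)
qed

definition I_minus_A0_inv :: "real^'n^'n" where
  "I_minus_A0_inv = matrix_inv (mat 1 - A 0)"

lemmas I_minus_A0_inv_right = matrix_inv_inverse(1)[OF invertible_I_minus_A0, folded I_minus_A0_inv_def]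
lemmas I_minus_A0_inv_left = matrix_inv_inverse(2)[OF invertible_I_minus_A0, folded I_minus_A0_inv_def]

lemma I_minus_A0_inv_nonneg: "nonneg_mat I_minus_A0_inv"
  unfolding nonneg_mat_def
proof (intro allI)
  fix i j
  have "(mat 1 - A 0) *v (I_minus_A0_inv *v axis j 1) = axis j 1"
    by (simp only: matrix_vector_mul_assoc I_minus_A0_inv_right matrix_vector_mul_lid)
  then have "0 \<le> (I_minus_A0_inv *v axis j 1) $ i"
    by (intro allI I_minus_A0_inverse_positive[of "I_minus_A0_inv *v axis j 1"]) (simp add: axis_def)
  then show "0 \<le> I_minus_A0_inv $ i $ j"
    by (simp only: matrix_vector_mult_basis column_def vec_lambda_beta)
qed

definition admissible :: "real^'n^'n \<Rightarrow> bool" where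
  "admissible X \<longleftrightarrow> nonneg_mat X \<and> summable (\<lambda>k. A (int k - 1) ** mpow X k)"

definition R1 :: "real^'n^'n \<Rightarrow> real^'n^'n" where
  "R1 X = (\<Sum>j. A (int j + 1) ** mpow X (j + 2))"

definition R2 :: "real^'n^'n \<Rightarrow> real^'n^'n" where
  "R2 X = (\<Sum>j. A (int j + 2) ** mpow X (j + 3))"

definition F :: "real^'n^'n \<Rightarrow> real^'n^'n" where
  "F X = I_minus_A0_inv ** (A (-1) + R1 X)"

definition Q :: "real^'n^'n \<Rightarrow> real^'n^'n \<Rightarrow> real^'n^'n" where
  "Q U V = I_minus_A0_inv ** (A (-1) + A 1 ** (U ** U) + R2 V)"

definition Phi :: "real^'n^'n \<Rightarrow> real^'n^'n" where
  "Phi X = Q (F X) X"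

lemma series_term_nonneg: "nonneg_mat X \<Longrightarrow> nonneg_mat (A (int k - 1) ** mpow X k)"
  by (simp add: nonneg_mat_mult nonneg_mat_mpow nonneg_A)

lemma series_term_mat_le:
  "nonneg_mat X \<Longrightarrow> mat_le X X' \<Longrightarrow> mat_le (A (int k - 1) ** mpow X k) (A (int k - 1) ** mpow X' k)"
  by (simp add: mat_le_mult nonneg_mat_mpow nonneg_A mat_le_mpow)

lemma admissible_mat_le:
  assumes "admissible X'" "nonneg_mat X" "mat_le X X'"
  shows "admissible X"
  using assms summable_mat_le(1)[of "\<lambda>k. A (int k - 1) ** mpow X k" "\<lambda>k. A (int k - 1) ** mpow X' k"]
  by (simp add: admissible_def series_term_nonneg series_term_mat_le)

lemma admissible_if_stochastic:
  assumes "stochastic X"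
  shows "admissible X"
proof -
  have X: "nonneg_mat X"
    using assms by (simp add: stochastic_def)
  have ones: "summable (\<lambda>k. A (int k - 1) ** (\<chi> i j. 1))"
    using sums_matrix_mult_right[OF summable_sums[OF summ]] by (auto simp: summable_def)
  have le: "mat_le (A (int k - 1) ** mpow X k) (A (int k - 1) ** (\<chi> i j. 1))" for k
    using stochastic_entry_le_1[OF stochastic_mpow[OF assms]] X
    by (intro mat_le_mult) (auto simp: nonneg_A mat_le_def nonneg_mat_mpow)
  show ?thesis
    using X summable_mat_le(1)[OF series_term_nonneg[OF X] le ones] by (simp add: admissible_def)
qed

lemma series_split_R1:
  assumes "admissible X"
  shows "(\<Sum>k. A (int k - 1) ** mpow X k) = A (-1) + A 0 ** X + R1 X"
    and "summable (\<lambda>j. A (int j + 1) ** mpow X (j + 2))"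
proof -
  have s: "summable (\<lambda>k. A (int k - 1) ** mpow X k)"
    using assms admissible_def by blast
  have shift: "(\<lambda>j. A (int (j + 2) - 1) ** mpow X (j + 2)) = (\<lambda>j. A (int j + 1) ** mpow X (j + 2))"
    by (simp add: algebra_simps)
  show "summable (\<lambda>j. A (int j + 1) ** mpow X (j + 2))"
    using s summable_iff_shift[of "\<lambda>k. A (int k - 1) ** mpow X k" 2] shift by simp
  have "(\<Sum>k. A (int k - 1) ** mpow X k)
      = (\<Sum>j. A (int (j + 2) - 1) ** mpow X (j + 2)) + (\<Sum>i<2. A (int i - 1) ** mpow X i)"
    by (rule suminf_split_initial_segment[OF s])
  then show "(\<Sum>k. A (int k - 1) ** mpow X k) = A (-1) + A 0 ** X + R1 X"
    unfolding shift R1_def by (simp add: numeral_2_eq_2)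
qed

lemma R1_split_R2:
  assumes "admissible X"
  shows "R1 X = A 1 ** (X ** X) + R2 X"
    and "summable (\<lambda>j. A (int j + 2) ** mpow X (j + 3))"
proof -
  have s: "summable (\<lambda>j. A (int j + 1) ** mpow X (j + 2))"
    by (rule series_split_R1(2)[OF assms])
  have shift: "(\<lambda>j. A (int (Suc j) + 1) ** mpow X (Suc j + 2)) = (\<lambda>j. A (int j + 2) ** mpow X (j + 3))"
    by (simp add: algebra_simps numeral_3_eq_3)
  show "summable (\<lambda>j. A (int j + 2) ** mpow X (j + 3))"
    using s summable_iff_shift[of "\<lambda>j. A (int j + 1) ** mpow X (j + 2)" 1] shift by simp
  show "R1 X = A 1 ** (X ** X) + R2 X"
    using suminf_split_head[OF s] unfolding R1_def R2_def shift[symmetric]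
    by (simp add: numeral_2_eq_2 algebra_simps)
qed

lemma R2_mono:
  assumes "admissible X'" "nonneg_mat X" "mat_le X X'"
  shows "nonneg_mat (R2 X)" and "mat_le (R2 X) (R2 X')"
proof -
  have shift: "int (j + 3) - 1 = int j + 2" for j
    by simp
  have t: "nonneg_mat (A (int j + 2) ** mpow X (j + 3))" for j
    using series_term_nonneg[OF assms(2), of "j + 3"] by (simp only: shift)
  have le: "mat_le (A (int j + 2) ** mpow X (j + 3)) (A (int j + 2) ** mpow X' (j + 3))" for j
    using series_term_mat_le[OF assms(2,3), of "j + 3"] by (simp only: shift)
  have "admissible X"
    by (rule admissible_mat_le[OF assms])
  show "nonneg_mat (R2 X)"
    unfolding R2_def by (rule nonneg_mat_suminf[OF t R1_split_R2(2)[OF \<open>admissible X\<close>]])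
  show "mat_le (R2 X) (R2 X')"
    unfolding R2_def by (rule summable_mat_le(2)[OF t le R1_split_R2(2)[OF assms(1)]])
qed

lemma F_eq_Q: "admissible X \<Longrightarrow> F X = Q X X"
  unfolding F_def Q_def by (simp add: R1_split_R2(1) add.assoc)

lemma Q_mono:
  assumes "admissible V'" "nonneg_mat U" "mat_le U U'" "nonneg_mat V" "mat_le V V'"
  shows "nonneg_mat (Q U V)" and "mat_le (Q U V) (Q U' V')"
proof -
  have A: "nonneg_mat (A 1)" "nonneg_mat (A (-1))"
    using nonneg by auto
  have UU: "nonneg_mat (U ** U)" "mat_le (U ** U) (U' ** U')"
    using assms(2,3) by (simp_all add: nonneg_mat_mult mat_le_mult)
  have "nonneg_mat (A (-1) + A 1 ** (U ** U) + R2 V)"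
    using A UU R2_mono(1)[OF assms(1,4,5)] by (simp add: nonneg_mat_add nonneg_mat_mult)
  moreover have "mat_le (A (-1) + A 1 ** (U ** U) + R2 V) (A (-1) + A 1 ** (U' ** U') + R2 V')"
    using A UU R2_mono(2)[OF assms(1,4,5)] by (simp add: mat_le_add mat_le_mult)
  ultimately show "nonneg_mat (Q U V)" "mat_le (Q U V) (Q U' V')"
    unfolding Q_def using I_minus_A0_inv_nonneg by (simp_all add: nonneg_mat_mult mat_le_mult)
qed

lemma F_mono:
  assumes "admissible X'" "nonneg_mat X" "mat_le X X'"
  shows "nonneg_mat (F X)" and "mat_le (F X) (F X')"
  using Q_mono[OF assms assms(2,3)] admissible_mat_le[OF assms] assms(1) by (simp_all add: F_eq_Q)

lemma Phi_mono:
  assumes "admissible X'" "nonneg_mat X" "mat_le X X'"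
  shows "nonneg_mat (Phi X)" and "mat_le (Phi X) (Phi X')"
  unfolding Phi_def using Q_mono[OF assms(1) F_mono[OF assms] assms(2,3)] by simp_all

lemma F_le_Phi:
  assumes "admissible X" "nonneg_mat X" "mat_le X (F X)"
  shows "mat_le (F X) (Phi X)"
  using Q_mono(2)[OF assms(1,2,3,2) mat_le_refl] F_eq_Q[OF assms(1)] by (simp add: Phi_def)

lemma Phi_eq:
  assumes "admissible X"
  shows "Phi X = F X + I_minus_A0_inv ** A 1 ** (F X ** F X - X ** X)"
proof -
  have "F X = I_minus_A0_inv ** (A (-1) + A 1 ** (X ** X) + R2 X)"
    using F_eq_Q[OF assms] by (simp add: Q_def)
  then show ?thesis
    unfolding Phi_def Q_def
    by (simp add: matrix_add_ldistrib matrix_mult_diff_ldistrib matrix_mul_assoc)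
qed

lemma solves_eq_iff_F_fixed:
  assumes "admissible X"
  shows "solves_eq A X \<longleftrightarrow> F X = X"
proof -
  have "solves_eq A X \<longleftrightarrow> X = A (-1) + A 0 ** X + R1 X"
    using assms series_split_R1(1)[OF assms] by (simp add: solves_eq_def admissible_def)
  also have "\<dots> \<longleftrightarrow> (mat 1 - A 0) ** X = A (-1) + R1 X"
    by (auto simp: matrix_mult_diff_rdistrib algebra_simps)
  also have "\<dots> \<longleftrightarrow> F X = X"
    unfolding F_def
    by (metis I_minus_A0_inv_left I_minus_A0_inv_right matrix_mul_assoc matrix_mul_lid)
  finally show ?thesis .
qed

lemma series_stochastic_ones:
  assumes "stochastic X"
  shows "(\<Sum>k. A (int k - 1) ** mpow X k) *v ones = ones"
proof -
  have "summable (\<lambda>k. A (int k - 1) ** mpow X k)"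
    using admissible_if_stochastic[OF assms] by (simp add: admissible_def)
  from sums_matrix_vector_mult[OF summable_sums[OF this]]
  have "(\<lambda>k. (A (int k - 1) ** mpow X k) *v ones) sums ((\<Sum>k. A (int k - 1) ** mpow X k) *v ones)" .
  moreover have "(A (int k - 1) ** mpow X k) *v ones = A (int k - 1) *v ones" for k
    using stochastic_mpow[OF assms, of k] by (simp add: matrix_vector_mul_assoc[symmetric] stochastic_def)
  ultimately show ?thesis
    using A_ones_sums by (simp add: sums_unique2)
qed

lemma F_stochastic:
  assumes "stochastic X"
  shows "stochastic (F X)"
proof -
  have X: "admissible X" "X *v ones = ones"
    using assms by (simp_all add: admissible_if_stochastic stochastic_def)
  have "(A (-1) + R1 X) *v ones + A 0 *v ones = ones"
    using series_stochastic_ones[OF assms] series_split_R1(1)[OF X(1)] X(2)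
    by (simp add: matrix_vector_mult_add_rdistrib matrix_vector_mul_assoc[symmetric] algebra_simps)
  then have "(A (-1) + R1 X) *v ones = (mat 1 - A 0) *v ones"
    by (simp add: matrix_vector_mult_diff_rdistrib algebra_simps)
  then have "F X *v ones = ones"
    unfolding F_def by (simp add: matrix_vector_mul_assoc[symmetric] matrix_vector_mul_assoc I_minus_A0_inv_left)
  moreover have "nonneg_mat (F X)"
    using F_mono(1)[OF X(1)] assms by (simp add: stochastic_def)
  ultimately show ?thesis
    by (simp add: stochastic_def)
qed

lemma Phi_stochastic:
  assumes "stochastic X"
  shows "stochastic (Phi X)"
proof -
  have X: "admissible X" "X *v ones = ones" "nonneg_mat X"
    using assms by (simp_all add: admissible_if_stochastic stochastic_def)
  have FX: "F X *v ones = ones" "nonneg_mat (F X)"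
    using F_stochastic[OF assms] by (simp_all add: stochastic_def)
  have "Phi X *v ones = ones"
    unfolding Phi_eq[OF X(1)]
    by (simp add: matrix_vector_mult_add_rdistrib matrix_vector_mult_diff_rdistrib
        matrix_vector_mul_assoc[symmetric] FX X)
  moreover have "nonneg_mat (Phi X)"
    unfolding Phi_def using Q_mono(1)[OF X(1) FX(2) mat_le_refl X(3) mat_le_refl] .
  ultimately show ?thesis
    by (simp add: stochastic_def)
qed

lemma tendsto_F:
  assumes B: "admissible B" and lim: "Z \<longlonglongrightarrow> L"
    and Z: "\<And>k. nonneg_mat (Z k)" "\<And>k. mat_le (Z k) B" and L: "nonneg_mat L" "mat_le L B"
  shows "(\<lambda>k. F (Z k)) \<longlonglongrightarrow> F L"
proof -
  have adm: "admissible (Z k)" "admissible L" for k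
    using admissible_mat_le[OF B] Z L by auto
  have R1_eq: "R1 X = (\<Sum>k. A (int k - 1) ** mpow X k) - A (-1) - A 0 ** X" if "admissible X" for X
    using series_split_R1(1)[OF that] by simp
  have "(\<lambda>k. \<Sum>j. A (int j - 1) ** mpow (Z k) j) \<longlonglongrightarrow> (\<Sum>j. A (int j - 1) ** mpow L j)"
    using B by (intro tendsto_mat_power_series[OF nonneg_A _ lim Z]) (simp add: admissible_def)
  then have "(\<lambda>k. R1 (Z k)) \<longlonglongrightarrow> R1 L"
    unfolding R1_eq[OF adm(1)] R1_eq[OF adm(2)]
    by (intro tendsto_diff tendsto_matrix_mult tendsto_const lim)
  then show ?thesis
    unfolding F_def by (intro tendsto_matrix_mult tendsto_add tendsto_const)
qed

subsection \<open>Row sums of nonnegative solutions\<close>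

lemma row_average_le:
  assumes "(\<lambda>k. (A (int k - 1) *v x k) $ l) sums s" and "\<And>k i. x k $ i \<le> M"
  shows "s \<le> M"
proof -
  have bound: "(A (int k - 1) *v x k) $ l \<le> M * (A (int k - 1) *v ones) $ l" for k
  proof -
    have "(A (int k - 1) *v x k) $ l \<le> (\<Sum>i\<in>UNIV. A (int k - 1) $ l $ i * M)"
      unfolding matrix_vector_mult_def vec_lambda_beta
      by (intro sum_mono mult_left_mono) (use nonneg_A assms(2) in \<open>auto simp: nonneg_mat_def\<close>)
    then show ?thesis
      by (simp add: matrix_vector_mult_def sum_distrib_left mult.commute)
  qed
  have "(\<lambda>k. M * (A (int k - 1) *v ones) $ l) sums (M * 1)"
    by (intro sums_mult row_sums_sums)
  from sums_le[OF bound assms(1) this] show ?thesis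
    by simp
qed

lemma solution_power_recursion:
  assumes "solves_eq A H"
  shows "(\<lambda>k. A (int k - 1) *v (mpow H (k + m) *v ones)) sums (mpow H (Suc m) *v ones)"
proof -
  have "(\<lambda>k. A (int k - 1) ** mpow H k) sums H"
    using assms unfolding solves_eq_def by (metis summable_sums)
  from sums_matrix_vector_mult[OF this, of "mpow H m *v ones"] show ?thesis
    by (simp add: matrix_vector_mul_assoc mpow_add matrix_mul_assoc)
qed

lemma drift_sums: "(\<lambda>k. of_int (int k - 1) *\<^sub>R (A (int k - 1) *v ones)) sums w"
  using sums_matrix_vector_mult[OF summable_sums[OF summ_drift], of ones]
  by (simp add: scaleR_matrix_vector_assoc)

definition deficit :: "real^'n^'n \<Rightarrow> real \<Rightarrow> real^'n \<Rightarrow> nat \<Rightarrow> real^'n" where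
  "deficit H \<epsilon> a n = ones - mpow H n *v ones - (\<epsilon> * real n) *\<^sub>R ones - \<epsilon> *\<^sub>R a"

lemma deficit_sums:
  assumes "solves_eq A H"
  shows "(\<lambda>k. (A (int k - 1) *v deficit H \<epsilon> a (k + m)) $ l)
      sums (deficit H \<epsilon> a (Suc m) $ l - \<epsilon> * (P *v a - a + w) $ l)"
proof -
  have "(\<lambda>k. (A (int k - 1) *v ones) $ l - (A (int k - 1) *v (mpow H (k + m) *v ones)) $ l
      - \<epsilon> * (real m + 1) * (A (int k - 1) *v ones) $ l
      - \<epsilon> * (of_int (int k - 1) * (A (int k - 1) *v ones) $ l) - \<epsilon> * (A (int k - 1) *v a) $ l)
    sums (1 - (mpow H (Suc m) *v ones) $ l - \<epsilon> * (real m + 1) * 1 - \<epsilon> * w $ l - \<epsilon> * (P *v a) $ l)"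
    using sums_vec_nth[OF solution_power_recursion[OF assms, of m], of l]
      sums_vec_nth[OF drift_sums, of l]
      sums_vec_nth[OF sums_matrix_vector_mult[OF summable_sums[OF summ], of a], of l]
    by (intro sums_diff sums_mult row_sums_sums) simp_all
  moreover have "real (k + m) = (real m + 1) + of_int (int k - 1)" for k
    by simp
  ultimately show ?thesis
    unfolding deficit_def
    by (simp add: matrix_vector_mult_diff_distrib matrix_vector_mult_scaleR algebra_simps)
qed

text \<open>Maximum principle: by the drift of \<open>a\<close>, \<open>deficit H \<epsilon> a n\<close> is strictly subharmonic in
  \<open>n \<ge> 1\<close> and tends to \<open>-\<infinity>\<close>, so its maximum is attained at \<open>n = 0\<close>.\<close>
lemma solution_row_deficit_le:
  assumes H: "nonneg_mat H" "solves_eq A H" and a: "\<And>j. (P *v a - a + w) $ j < 0"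
    and amin: "\<And>l. a $ jm \<le> a $ l" and "\<epsilon> > 0"
  shows "1 - (H *v ones) $ j \<le> \<epsilon> * (1 + a $ j - a $ jm)"
proof -
  define h where "h n l = deficit H \<epsilon> a n $ l" for n l
  have h0: "h 0 l = - \<epsilon> * a $ l" for l
    by (simp add: h_def deficit_def)
  have below: "h n l \<le> h 0 jm" if "nat \<lceil>1 / \<epsilon>\<rceil> < n" for n l
  proof -
    from that have "\<lceil>1 / \<epsilon>\<rceil> < int n"
      by linarith
    then have "1 / \<epsilon> \<le> real n - 1"
      by (simp add: ceiling_less_iff)
    then have "1 < \<epsilon> * real n"
      using \<open>\<epsilon> > 0\<close> by (simp add: field_simps)
    moreover have "0 \<le> (mpow H n *v ones) $ l"
      using nonneg_mat_mpow[OF H(1), of n]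
      by (auto simp: matrix_vector_mult_def nonneg_mat_def intro: sum_nonneg)
    moreover have "\<epsilon> * a $ jm \<le> \<epsilon> * a $ l"
      using amin[of l] \<open>\<epsilon> > 0\<close> by simp
    ultimately show ?thesis
      unfolding h0 by (simp add: h_def deficit_def algebra_simps)
  qed
  obtain n0 l0 where max: "\<And>n l. h n l \<le> h n0 l0"
    using ex_max_if_eventually_below[of "nat \<lceil>1 / \<epsilon>\<rceil>" h jm] below by blast
  have "n0 = 0"
  proof (rule ccontr)
    assume "n0 \<noteq> 0"
    then obtain m where "n0 = Suc m"
      using not0_implies_Suc by blast
    have "h (Suc m) l0 - \<epsilon> * (P *v a - a + w) $ l0 \<le> h n0 l0"
      unfolding h_def by (rule row_average_le[OF deficit_sums[OF H(2)]]) (simp add: max[unfolded h_def])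
    moreover have "\<epsilon> * (P *v a - a + w) $ l0 < 0"
      using mult_pos_neg[OF \<open>\<epsilon> > 0\<close> a[of l0]] .
    ultimately show False
      using \<open>n0 = Suc m\<close> by simp
  qed
  have "h 1 j \<le> - \<epsilon> * a $ l0"
    using max[of 1 j] h0[of l0] \<open>n0 = 0\<close> by simp
  also have "\<dots> \<le> - \<epsilon> * a $ jm"
    using amin[of l0] \<open>\<epsilon> > 0\<close> by simp
  finally show ?thesis
    by (simp add: h_def deficit_def algebra_simps)
qed

lemma solution_row_sums_ge_1:
  assumes "nonneg_mat H" "solves_eq A H"
  shows "1 \<le> (H *v ones) $ j"
proof -
  obtain a where a: "\<And>j. (P *v a - a + w) $ j < 0"
    using lyapunov_vector by blast
  obtain jm where amin: "\<And>l. a $ jm \<le> a $ l"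
    using ex_min_if_finite[of "range (($) a)"] by (auto simp: not_less)
  define C where "C = 1 + a $ j - a $ jm"
  have "0 < C"
    using amin[of j] by (simp add: C_def)
  have "1 - (H *v ones) $ j \<le> 0 + e" if "0 < e" for e
    using solution_row_deficit_le[OF assms a amin, of "e / C" j] \<open>0 < C\<close> that
    by (simp add: C_def)
  then show ?thesis
    using field_le_epsilon[of "1 - (H *v ones) $ j" 0] by simp
qed

lemma Phi_increasing_below:
  assumes G: "admissible G" "F G = G"
    and Z: "nonneg_mat Z" "mat_le Z G" "mat_le Z (F Z)"
  shows "mat_le Z (Phi Z)" and "nonneg_mat (Phi Z)" and "mat_le (Phi Z) G"
    and "mat_le (Phi Z) (F (Phi Z))"
proof -
  have adm: "admissible Z"
    by (rule admissible_mat_le[OF G(1) Z(1,2)])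
  have "Phi G = Q G G"
    by (simp only: Phi_def G(2))
  also have "\<dots> = F G"
    by (rule F_eq_Q[OF G(1), symmetric])
  finally have "Phi G = G"
    using G(2) by simp
  then show "nonneg_mat (Phi Z)" "mat_le (Phi Z) G"
    using Phi_mono[OF G(1) Z(1,2)] by simp_all
  have FZ: "nonneg_mat (F Z)"
    by (rule F_mono(1)[OF G(1) Z(1,2)])
  have "mat_le (F Z) (Phi Z)"
    by (rule F_le_Phi[OF adm Z(1,3)])
  then show Z_le: "mat_le Z (Phi Z)"
    using Z(3) mat_le_trans by blast
  have "admissible (Phi Z)"
    by (rule admissible_mat_le[OF G(1) \<open>nonneg_mat (Phi Z)\<close> \<open>mat_le (Phi Z) G\<close>])
  from Q_mono(2)[OF this FZ \<open>mat_le (F Z) (Phi Z)\<close> Z(1) Z_le]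
  show "mat_le (Phi Z) (F (Phi Z))"
    by (simp only: Phi_def[of Z, symmetric] F_eq_Q[OF \<open>admissible (Phi Z)\<close>])
qed

lemma minimal_solution_fixed:
  assumes "minimal_nonneg_solution A G"
  shows "admissible G" and "F G = G"
proof -
  show "admissible G"
    using assms by (simp add: minimal_nonneg_solution_def admissible_def solves_eq_def)
  then show "F G = G"
    using assms solves_eq_iff_F_fixed by (simp add: minimal_nonneg_solution_def)
qed

lemma Phi_lower_iterates:
  assumes "admissible G" "F G = G"
  shows "nonneg_mat ((Phi ^^ k) 0) \<and> mat_le ((Phi ^^ k) 0) G \<and> mat_le ((Phi ^^ k) 0) (F ((Phi ^^ k) 0))"
proof (induction k)
  case 0
  have "nonneg_mat G"
    using assms(1) by (simp add: admissible_def)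
  then have "nonneg_mat (F 0)"
    using F_mono(1)[OF assms(1)] by (simp add: mat_le_def nonneg_mat_def)
  with \<open>nonneg_mat G\<close> show ?case
    by (simp add: mat_le_def nonneg_mat_def)
next
  case (Suc k)
  then show ?case
    using Phi_increasing_below(2-4)[OF assms] by simp
qed

lemma Phi_lower_iterates_tendsto:
  assumes "minimal_nonneg_solution A G"
  shows "(\<lambda>k. (Phi ^^ k) 0) \<longlonglongrightarrow> G"
proof -
  note G = minimal_solution_fixed[OF assms]
  define Z where "Z k = (Phi ^^ k) 0" for k
  have Z: "nonneg_mat (Z k)" "mat_le (Z k) G" "mat_le (Z k) (F (Z k))" for k
    using Phi_lower_iterates[OF G] by (simp_all add: Z_def)
  have Z_Suc: "Z (Suc k) = Phi (Z k)" for k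
    by (simp add: Z_def)
  have "mat_le (Z k) (Z (Suc k))" for k
    using Phi_increasing_below(1)[OF G Z] by (simp add: Z_Suc)
  then obtain L where lim: "Z \<longlonglongrightarrow> L" and "mat_le L G" and Z_le: "\<And>k. mat_le (Z k) L"
    using mat_le_incseq_tendsto Z(2) by blast
  have "nonneg_mat L"
    using Z(1)[of 0] Z_le[of 0] nonneg_mat_mat_le by blast
  have "(\<lambda>k. F (Z k)) \<longlonglongrightarrow> L"
  proof (rule mat_le_sandwich_tendsto[OF Z(3) _ lim])
    show "mat_le (F (Z k)) (Z (Suc k))" for k
      using F_le_Phi[OF admissible_mat_le[OF G(1) Z(1,2)] Z(1,3)] by (simp add: Z_Suc)
    show "(\<lambda>k. Z (Suc k)) \<longlonglongrightarrow> L"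
      using LIMSEQ_Suc[OF lim] .
  qed
  moreover have "(\<lambda>k. F (Z k)) \<longlonglongrightarrow> F L"
    by (rule tendsto_F[OF G(1) lim Z(1,2) \<open>nonneg_mat L\<close> \<open>mat_le L G\<close>])
  ultimately have "F L = L"
    using LIMSEQ_unique by blast
  then have "mat_le G L"
    using assms \<open>nonneg_mat L\<close> solves_eq_iff_F_fixed admissible_mat_le[OF G(1) \<open>nonneg_mat L\<close> \<open>mat_le L G\<close>]
    by (simp add: minimal_nonneg_solution_def)
  then show ?thesis
    using lim mat_le_antisym[OF \<open>mat_le L G\<close>] by (simp add: Z_def[abs_def])
qed

lemma Phi_lower_iterates_le:
  assumes G: "admissible G" "F G = G"
    and X: "\<And>k. stochastic (X k)" "\<And>k. X (Suc k) = Phi (X k)"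
  shows "mat_le ((Phi ^^ k) 0) (X k)"
proof (induction k)
  case 0
  then show ?case
    using X(1)[of 0] by (simp add: stochastic_def nonneg_mat_def mat_le_def)
next
  case (Suc k)
  have "nonneg_mat ((Phi ^^ k) 0)"
    using Phi_lower_iterates[OF G] by blast
  from Phi_mono(2)[OF admissible_if_stochastic[OF X(1)] this Suc] show ?case
    by (simp add: X(2))
qed

theorem iteration_tendsto_minimal_solution:
  assumes Gmin: "minimal_nonneg_solution A G" and X0: "stochastic (X 0)"
    and X_Suc: "\<And>k. X (Suc k) = F (X k) + I_minus_A0_inv ** A 1 ** (F (X k) ** F (X k) - X k ** X k)"
  shows "X \<longlonglongrightarrow> G"
proof -
  have X_stoch: "stochastic (X k)" for k
  proof (induction k)
    case (Suc k)
    then show ?case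
      using Phi_stochastic[OF Suc.IH] by (simp add: X_Suc Phi_eq admissible_if_stochastic)
  qed (rule X0)
  have "X (Suc k) = Phi (X k)" for k
    by (simp add: X_Suc Phi_eq admissible_if_stochastic X_stoch)
  then have "mat_le ((Phi ^^ k) 0) (X k)" for k
    by (rule Phi_lower_iterates_le[OF minimal_solution_fixed[OF Gmin] X_stoch])
  moreover have "1 \<le> (G *v ones) $ i" for i
    using Gmin solution_row_sums_ge_1 by (simp add: minimal_nonneg_solution_def)
  ultimately show ?thesis
    by (intro stochastic_squeeze_tendsto[OF X_stoch _ Phi_lower_iterates_tendsto[OF Gmin]])
qed

end

theorem proposition2:
  fixes A :: "int \<Rightarrow> real^'n^'n"
    and G :: "real^'n^'n"
    and X Y :: "nat \<Rightarrow> real^'n^'n"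
  assumes nonneg: "\<And>i. i \<ge> -1 \<Longrightarrow> nonneg_mat (A i)"
    and summ: "summable (\<lambda>k. A (int k - 1))"
    and irr: "irreducible_mat (\<Sum>k. A (int k - 1))"
    and stoch: "stochastic (\<Sum>k. A (int k - 1))"
    and summ_drift: "summable (\<lambda>k. of_int (int k - 1) *\<^sub>R A (int k - 1))"
    and drift: "\<forall>v :: real^'n. (\<forall>i. v $ i > 0) \<and> v v* (\<Sum>k. A (int k - 1)) = v
                  \<and> sum (\<lambda>i. v $ i) UNIV = 1
                \<longrightarrow> v \<bullet> ((\<Sum>k. of_int (int k - 1) *\<^sub>R A (int k - 1)) *v (\<chi> i. 1)) < 0"
    and Gmin: "minimal_nonneg_solution A G"
    and X0: "stochastic (X 0)"
    and Ydef: "\<And>k. (mat 1 - A 0) ** Y k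
                 = A (-1) + (\<Sum>j. A (int j + 1) ** mpow (X k) (j + 2))"
    and Xdef: "\<And>k. X (Suc k) = Y k + matrix_inv (mat 1 - A 0) ** A 1
                                   ** (Y k ** Y k - X k ** X k)"
  shows "X \<longlonglongrightarrow> G"
proof -
  interpret mg1_type A
    using nonneg summ irr stoch summ_drift drift by (rule mg1_type.intro)
  have "Y k = F (X k)" for k
  proof -
    have "Y k = I_minus_A0_inv ** ((mat 1 - A 0) ** Y k)"
      by (simp add: matrix_mul_assoc I_minus_A0_inv_left)
    then show ?thesis
      by (simp add: Ydef F_def R1_def)
  qed
  with Xdef show ?thesis
    by (intro iteration_tendsto_minimal_solution[of G X, OF Gmin X0]) (simp add: I_minus_A0_inv_def)
qed

end
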